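(* Let $\Gamma:[0,1]\to\mathcal{D}$ be a continuous path. For any $s\in[0,1]$ and any finitely generated subgroup $H\le\Gamma_s$, the restriction $J_{s,t}|_H$ is an injective homomorphism into $\mathrm{PSL}_2\mathbb{C}$ for all $t\in[0,1]$ sufficiently close to $s$.
   Context: $\mathcal{D}$: discrete torsion-free subgroups of $\mathrm{PSL}_2\mathbb{C}$ with the Chabauty topology ($\Gamma_n\to\Gamma$ iff accumulation points of sequences $\psi_n\in\Gamma_n$ lie in $\Gamma$ and each element of $\Gamma$ is a limit of some $\psi_n\in\Gamma_n$). For a path $\Gamma$ with $\Gamma_t=\Gamma(t)$, $s\in[0,1]$, $\psi\in\Gamma_s$: a $\Gamma$-path through $\psi$ based at $s$ is a continuous $j:I\to\mathrm{PSL}_2\mathbb{C}$, $I\subseteq[0,1]$ an interval containing $s$, with $j(t)\in\Gamma_t$ for $t\in I$ and $j(s)=\psi$. Any two such paths agree on the intersection of their domains, so there is a maximal such interval $I^s_\psi$, carrying the path $j^s_\psi$. With $\overline{\mathrm{PSL}_2\mathbb{C}}=\mathrm{PSL}_2\mathbb{C}\cup\{\infty\}$, define $J_{s,t}:\Gamma_s\to\overline{\mathrm{PSL}_2\mathbb{C}}$ by $J_{s,t}(\psi)=j^s_\psi(t)$ if $t\in I^s_\psi$ and $\infty$ otherwise. *)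

theory Defs
  imports "HOL-Analysis.Analysis"
begin

definition SL2 :: "(complex^2^2) set" where
  "SL2 = {A. det A = 1}"

typedef psl2 = "{{A, -A} | A :: complex^2^2. det A = 1}"
  by (rule exI[of _ "{mat 1, - mat 1}"], auto)

definition psl_proj :: "complex^2^2 \<Rightarrow> psl2" where
  "psl_proj A = Abs_psl2 {A, -A}"

instantiation psl2 :: topological_space
begin
definition open_psl2 :: "psl2 set \<Rightarrow> bool" where
  "open_psl2 U = openin (top_of_set SL2) {A \<in> SL2. psl_proj A \<in> U}"
instance
proof
  show "open (UNIV :: psl2 set)"
    unfolding open_psl2_def by simp
next
  fix S T :: "psl2 set"
  assume "open S" "open T"
  then have "openin (top_of_set SL2) ({A \<in> SL2. psl_proj A \<in> S} \<inter> {A \<in> SL2. psl_proj A \<in> T})"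
    unfolding open_psl2_def by (rule openin_Int)
  moreover have "{A \<in> SL2. psl_proj A \<in> S \<inter> T} = {A \<in> SL2. psl_proj A \<in> S} \<inter> {A \<in> SL2. psl_proj A \<in> T}"
    by auto
  ultimately show "open (S \<inter> T)" unfolding open_psl2_def by simp
next
  fix K :: "psl2 set set"
  assume "\<forall>S\<in>K. open S"
  then have "openin (top_of_set SL2) (\<Union>S\<in>K. {A \<in> SL2. psl_proj A \<in> S})"
    unfolding open_psl2_def by (intro openin_Union) auto
  moreover have "{A \<in> SL2. psl_proj A \<in> \<Union>K} = (\<Union>S\<in>K. {A \<in> SL2. psl_proj A \<in> S})"
    by auto
  ultimately show "open (\<Union>K)" unfolding open_psl2_def by simp
qed
end

instantiation psl2 :: power
begin
definition times_psl2 :: "psl2 \<Rightarrow> psl2 \<Rightarrow> psl2" where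
  "times_psl2 x y = Abs_psl2 {A ** B | A B. A \<in> Rep_psl2 x \<and> B \<in> Rep_psl2 y}"
definition one_psl2 :: psl2 where
  "one_psl2 = Abs_psl2 {mat 1, - mat 1}"
instance ..
end

definition psl_inv :: "psl2 \<Rightarrow> psl2" where
  "psl_inv x = Abs_psl2 {matrix_inv A | A. A \<in> Rep_psl2 x}"

definition psl_subgroup :: "psl2 set \<Rightarrow> bool" where
  "psl_subgroup G \<longleftrightarrow> 1 \<in> G \<and> (\<forall>a\<in>G. \<forall>b\<in>G. a * b \<in> G) \<and> (\<forall>a\<in>G. psl_inv a \<in> G)"

definition psl_generated :: "psl2 set \<Rightarrow> psl2 set" where
  "psl_generated F = \<Inter>{K. psl_subgroup K \<and> F \<subseteq> K}"

definition psl_fin_gen :: "psl2 set \<Rightarrow> bool" where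
  "psl_fin_gen H \<longleftrightarrow> (\<exists>F. finite F \<and> F \<subseteq> H \<and> H = psl_generated F)"

definition psl_discrete :: "psl2 set \<Rightarrow> bool" where
  "psl_discrete G \<longleftrightarrow> (\<forall>g\<in>G. \<exists>U. open U \<and> U \<inter> G = {g})"

definition torsion_free :: "psl2 set \<Rightarrow> bool" where
  "torsion_free G \<longleftrightarrow> (\<forall>g\<in>G. \<forall>n::nat. n > 0 \<and> g ^ n = 1 \<longrightarrow> g = 1)"

definition Dspace :: "psl2 set set" where
  "Dspace = {G. psl_subgroup G \<and> psl_discrete G \<and> torsion_free G}"

definition chabauty_conv :: "(nat \<Rightarrow> psl2 set) \<Rightarrow> psl2 set \<Rightarrow> bool" where
  "chabauty_conv G G0 \<longleftrightarrow>
     (\<forall>\<psi> r g. (\<forall>n. \<psi> n \<in> G n) \<and> strict_mono r \<and> (\<psi> \<circ> r) \<longlonglongrightarrow> g \<longrightarrow> g \<in> G0) \<and>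
     (\<forall>g\<in>G0. \<exists>\<psi>. (\<forall>n. \<psi> n \<in> G n) \<and> \<psi> \<longlonglongrightarrow> g)"

definition chabauty_path :: "(real \<Rightarrow> psl2 set) \<Rightarrow> bool" where
  "chabauty_path \<Gamma> \<longleftrightarrow> (\<forall>t\<in>{0..1}. \<Gamma> t \<in> Dspace) \<and>
     (\<forall>t\<in>{0..1}. \<forall>\<tau>. (\<forall>n. \<tau> n \<in> {0..1}) \<and> \<tau> \<longlonglongrightarrow> t \<longrightarrow> chabauty_conv (\<lambda>n. \<Gamma> (\<tau> n)) (\<Gamma> t))"

definition gpath :: "(real \<Rightarrow> psl2 set) \<Rightarrow> real \<Rightarrow> psl2 \<Rightarrow> real set \<Rightarrow> (real \<Rightarrow> psl2) \<Rightarrow> bool" where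
  "gpath \<Gamma> s \<psi> I j \<longleftrightarrow> I \<subseteq> {0..1} \<and> is_interval I \<and> s \<in> I \<and> continuous_on I j \<and>
     (\<forall>t\<in>I. j t \<in> \<Gamma> t) \<and> j s = \<psi>"

text \<open>None plays the role of the point at infinity.\<close>
definition Jmap :: "(real \<Rightarrow> psl2 set) \<Rightarrow> real \<Rightarrow> real \<Rightarrow> psl2 \<Rightarrow> psl2 option" where
  "Jmap \<Gamma> s t \<psi> =
     (if \<exists>I j. gpath \<Gamma> s \<psi> I j \<and> t \<in> I
      then Some (THE g. \<exists>I j. gpath \<Gamma> s \<psi> I j \<and> t \<in> I \<and> j t = g)
      else None)"

end

theory Submission
  imports Defs
begin

text \<open>Along a Chabauty path the groups \<open>\<Gamma> t\<close> are locally uniformly discrete: an annulus around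
  \<open>1\<close> free of elements of \<open>\<Gamma> t0\<close> stays free for \<open>t\<close> near \<open>t0\<close> (a Chabauty limit of
  elements in it would lie in \<open>\<Gamma> t0\<close>, and bounded sets in \<open>PSL(2,C)\<close> are compact), and a
  subgroup avoiding such an annulus meets the inner ball only in \<open>1\<close>, since squaring pushes small
  elements outwards without letting them jump the annulus. Hence for \<open>t\<close> near \<open>s\<close> each
  \<open>\<psi> \<in> \<Gamma> s\<close> has a unique element of \<open>\<Gamma> t\<close> close to it, and these form a continuous
  \<open>\<Gamma>\<close>-path; \<open>\<Gamma>\<close>-paths through a common point agree on their common domain by a clopen
  argument. Pointwise products and inverses of \<open>\<Gamma>\<close>-paths are \<open>\<Gamma>\<close>-paths, so the elements of
  \<open>\<Gamma> s\<close> admitting one on a fixed interval around \<open>s\<close> form a subgroup; an interval serving the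
  finitely many generators of \<open>H\<close> serves all of \<open>H\<close>. There \<open>J\<^sub>s\<^sub>,\<^sub>t\<close> is evaluation
  of these paths, hence a homomorphism, and it is injective because the \<open>\<Gamma>\<close>-path based at \<open>t\<close>
  through \<open>J\<^sub>s\<^sub>,\<^sub>t a\<close> is unique.\<close>

definition entry_norm :: "'a::real_normed_vector^'n^'m \<Rightarrow> real" where
  "entry_norm A = (\<Sum>i\<in>UNIV. \<Sum>j\<in>UNIV. norm (A$i$j))"

lemma entry_norm_nonneg: "0 \<le> entry_norm A"
  unfolding entry_norm_def by (intro sum_nonneg norm_ge_zero)

lemma entry_norm_zero [simp]: "entry_norm 0 = 0"
  by (simp add: entry_norm_def)

lemma entry_norm_eq_0_iff: "entry_norm A = 0 \<longleftrightarrow> A = 0"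
proof -
  have "entry_norm A = 0 \<longleftrightarrow> (\<forall>i j. norm (A$i$j) = 0)"
    unfolding entry_norm_def by (simp add: sum_nonneg_eq_0_iff sum_nonneg)
  then show ?thesis by (simp add: vec_eq_iff)
qed

lemma entry_norm_uminus: "entry_norm (- A) = entry_norm A"
  by (simp add: entry_norm_def)

lemma entry_norm_minus_commute: "entry_norm (A - B) = entry_norm (B - A)"
  by (metis entry_norm_uminus minus_diff_eq)

lemma entry_norm_triangle: "entry_norm (A + B) \<le> entry_norm A + entry_norm B"
  unfolding entry_norm_def sum.distrib[symmetric] by (intro sum_mono) (simp add: norm_triangle_ineq)

lemma entry_norm_reverse_triangle: "entry_norm X - entry_norm Y \<le> entry_norm (X + Y)"
  using entry_norm_triangle[of "X + Y" "- Y"] by (simp add: entry_norm_uminus)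

lemma entry_norm_add_self: "entry_norm (A + A) = 2 * entry_norm A"
proof -
  have "A + A = 2 *\<^sub>R A" by (simp add: scaleR_2)
  then show ?thesis by (simp add: entry_norm_def sum_distrib_left)
qed

lemma entry_norm_mat_1: "entry_norm (mat 1 :: 'a::real_normed_algebra_1^'n^'n) = CARD('n)"
  by (simp add: entry_norm_def mat_def if_distrib[of norm] cong: if_cong)

lemma entry_norm_mat_1_2 [simp]: "entry_norm (mat 1 :: 'a::real_normed_algebra_1^2^2) = 2"
  by (simp add: entry_norm_mat_1)

lemma entry_norm_mult_le:
  fixes A :: "'a::real_normed_algebra_1^'n^'m" and B :: "'a^'p^'n"
  shows "entry_norm (A ** B) \<le> entry_norm A * entry_norm B"
proof -
  have entry: "norm ((A ** B)$i$k) \<le> (\<Sum>j\<in>UNIV. norm (A$i$j) * norm (B$j$k))" for i k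
    unfolding matrix_matrix_mult_def vec_lambda_beta
    by (rule order_trans[OF norm_sum sum_mono[OF norm_mult_ineq]])
  have row: "(\<Sum>k\<in>UNIV. norm (B$j$k)) \<le> entry_norm B" for j
    unfolding entry_norm_def
    by (rule member_le_sum[of _ UNIV "\<lambda>j. \<Sum>k\<in>UNIV. norm (B$j$k)"]) (auto intro: sum_nonneg)
  have "entry_norm (A ** B) \<le> (\<Sum>i\<in>UNIV. \<Sum>k\<in>UNIV. \<Sum>j\<in>UNIV. norm (A$i$j) * norm (B$j$k))"
    unfolding entry_norm_def by (intro sum_mono entry)
  also have "\<dots> = (\<Sum>i\<in>UNIV. \<Sum>j\<in>UNIV. norm (A$i$j) * (\<Sum>k\<in>UNIV. norm (B$j$k)))"
    by (subst sum.swap) (simp add: sum_distrib_left)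
  also have "\<dots> \<le> (\<Sum>i\<in>UNIV. \<Sum>j\<in>UNIV. norm (A$i$j) * entry_norm B)"
    by (intro sum_mono mult_left_mono row norm_ge_zero)
  finally show ?thesis by (simp add: entry_norm_def sum_distrib_right)
qed

lemma norm_le_sum_norm_nth: "norm (x::'a::real_normed_vector^'n) \<le> (\<Sum>i\<in>UNIV. norm (x$i))"
  unfolding norm_vec_def by (rule L2_set_le_sum) simp

lemma norm_le_entry_norm: "norm A \<le> entry_norm A"
  unfolding entry_norm_def
  by (rule order_trans[OF norm_le_sum_norm_nth]) (intro sum_mono norm_le_sum_norm_nth)

lemma entry_norm_le_norm: "entry_norm (A::'a::real_normed_vector^'n^'m) \<le> CARD('m) * CARD('n) * norm A"
proof -
  have "norm (A$i$j) \<le> norm A" for i j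
    by (meson Finite_Cartesian_Product.norm_nth_le order_trans)
  then have "entry_norm A \<le> (\<Sum>i\<in>(UNIV::'m set). \<Sum>j\<in>(UNIV::'n set). norm A)"
    unfolding entry_norm_def by (intro sum_mono)
  then show ?thesis by simp
qed

lemma tendsto_entry_norm [tendsto_intros]:
  assumes "(f \<longlongrightarrow> A) F"
  shows "((\<lambda>x. entry_norm (f x)) \<longlongrightarrow> entry_norm A) F"
  unfolding entry_norm_def
  by (intro tendsto_sum tendsto_norm tendsto_vec_nth[OF tendsto_vec_nth[OF assms]])

lemma mat2_eq_iff:
  "(A::'a^2^2) = B \<longleftrightarrow> A$1$1 = B$1$1 \<and> A$1$2 = B$1$2 \<and> A$2$1 = B$2$1 \<and> A$2$2 = B$2$2"
  by (auto simp: vec_eq_iff forall_2)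

lemma matrix_mult_2_nth: "((A::'a::semiring_1^2^2) ** B)$i$j = A$i$1 * B$1$j + A$i$2 * B$2$j"
  by (simp add: matrix_matrix_mult_def sum_2)

lemma entry_norm_2:
  "entry_norm (A::'a::real_normed_vector^2^2) = norm (A$1$1) + norm (A$1$2) + norm (A$2$1) + norm (A$2$2)"
  by (simp add: entry_norm_def sum_2 add.assoc)

definition adjugate2 :: "'a::comm_ring_1^2^2 \<Rightarrow> 'a^2^2" where
  "adjugate2 A = (\<chi> i j. if i = 1 then (if j = 1 then A$2$2 else - A$1$2)
                         else (if j = 1 then - A$2$1 else A$1$1))"

lemma adjugate2_nth [simp]:
  "adjugate2 A $1$1 = A$2$2" "adjugate2 A $1$2 = - A$1$2"
  "adjugate2 A $2$1 = - A$2$1" "adjugate2 A $2$2 = A$1$1"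
  by (simp_all add: adjugate2_def)

lemma matrix_mult_adjugate2:
  assumes "det A = 1"
  shows "A ** adjugate2 A = mat 1" "adjugate2 A ** A = mat 1"
  using assms by (simp_all add: mat2_eq_iff matrix_mult_2_nth det_2 mat_def algebra_simps)

lemma matrix_inv_eq_adjugate2:
  assumes "det A = 1"
  shows "matrix_inv A = adjugate2 A"
  unfolding matrix_inv_def
proof (rule some_equality)
  show "A ** adjugate2 A = mat 1 \<and> adjugate2 A ** A = mat 1"
    using matrix_mult_adjugate2[OF assms] by simp
next
  fix B assume B: "A ** B = mat 1 \<and> B ** A = mat 1"
  have "B = (B ** A) ** adjugate2 A"
    using matrix_mult_adjugate2[OF assms] by (metis matrix_mul_assoc matrix_mul_rid)
  then show "B = adjugate2 A" using B by simp
qed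

lemma det_adjugate2: "det (adjugate2 A) = det A"
  by (simp add: det_2 algebra_simps)

lemma adjugate2_diff: "adjugate2 (A - B) = adjugate2 A - adjugate2 B"
  by (simp add: mat2_eq_iff)

lemma adjugate2_uminus: "adjugate2 (- A) = - adjugate2 A"
  by (simp add: mat2_eq_iff)

lemma entry_norm_adjugate2: "entry_norm (adjugate2 (A::'a::{real_normed_algebra_1,comm_ring_1}^2^2)) = entry_norm A"
  by (simp add: entry_norm_2)

lemma matrix_mul_uminus_left: "(- A :: 'a::ring_1^'n^'m) ** B = - (A ** B)"
  by (simp add: matrix_matrix_mult_def sum_negf vec_eq_iff)

lemma matrix_mul_uminus_right: "(A :: 'a::ring_1^'n^'m) ** (- B) = - (A ** B)"
  by (simp add: matrix_matrix_mult_def sum_negf vec_eq_iff)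

lemma det_uminus2 [simp]: "det (- A :: 'a::comm_ring_1^2^2) = det A"
  by (simp add: det_2)

definition psl_rep :: "psl2 \<Rightarrow> complex^2^2" where
  "psl_rep g = (SOME A. det A = 1 \<and> Rep_psl2 g = {A, - A})"

lemma psl_rep_spec: "det (psl_rep g) = 1 \<and> Rep_psl2 g = {psl_rep g, - psl_rep g}"
proof -
  have "\<exists>A. det A = 1 \<and> Rep_psl2 g = {A, - A}" using Rep_psl2[of g] by auto
  then show ?thesis unfolding psl_rep_def by (rule someI_ex)
qed

lemma det_psl_rep [simp]: "det (psl_rep g) = 1"
  using psl_rep_spec by blast

lemma psl_proj_rep [simp]: "psl_proj (psl_rep g) = g"
  unfolding psl_proj_def using psl_rep_spec[of g] by (metis Rep_psl2_inverse)

lemma Rep_psl_proj: "det A = 1 \<Longrightarrow> Rep_psl2 (psl_proj A) = {A, - A}"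
  unfolding psl_proj_def by (rule Abs_psl2_inverse) auto

lemma psl_proj_eq_iff:
  assumes "det A = 1" "det B = 1"
  shows "psl_proj A = psl_proj B \<longleftrightarrow> B = A \<or> B = - A"
proof
  assume "psl_proj A = psl_proj B"
  then have "{A, - A} = {B, - B}" using Rep_psl_proj assms by metis
  then show "B = A \<or> B = - A" by (metis doubleton_eq_iff minus_minus)
next
  assume "B = A \<or> B = - A"
  then have "{A, - A} = {B, - B}" by auto
  then show "psl_proj A = psl_proj B" unfolding psl_proj_def by (rule arg_cong)
qed

lemma psl_proj_uminus [simp]: "psl_proj (- A) = psl_proj A"
proof -
  have "{- A, - (- A)} = {A, - A}" by auto
  then show ?thesis unfolding psl_proj_def by (rule arg_cong)
qed

lemma psl_rep_proj: "det A = 1 \<Longrightarrow> psl_rep (psl_proj A) = A \<or> psl_rep (psl_proj A) = - A"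
  using psl_proj_eq_iff[of A "psl_rep (psl_proj A)"] by simp

lemma psl_proj_mult:
  assumes "det A = 1" "det B = 1"
  shows "psl_proj A * psl_proj B = psl_proj (A ** B)"
proof -
  have "{C ** D |C D. C \<in> {A, - A} \<and> D \<in> {B, - B}} = {A ** B, - (A ** B)}"
    by (auto simp: matrix_mul_uminus_left matrix_mul_uminus_right) (metis matrix_mul_uminus_left)
  then show ?thesis
    unfolding times_psl2_def psl_proj_def[of "A ** B"] using assms by (simp add: Rep_psl_proj)
qed

lemma one_psl2_eq: "1 = psl_proj (mat 1)"
  unfolding one_psl2_def psl_proj_def ..

lemma psl_inv_proj:
  assumes "det A = 1"
  shows "psl_inv (psl_proj A) = psl_proj (adjugate2 A)"
proof -
  have "{matrix_inv C |C. C \<in> {A, - A}} = {matrix_inv A, matrix_inv (- A)}"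
    by blast
  also have "\<dots> = {adjugate2 A, - adjugate2 A}"
    using assms by (simp add: matrix_inv_eq_adjugate2 adjugate2_uminus)
  finally have "{matrix_inv C |C. C \<in> {A, - A}} = {adjugate2 A, - adjugate2 A}" .
  then show ?thesis
    unfolding psl_inv_def psl_proj_def[of "adjugate2 A"] using assms by (simp add: Rep_psl_proj)
qed

lemma psl_inv_mult_eq_one_iff: "psl_inv a * b = 1 \<longleftrightarrow> a = b"
proof -
  define A B where "A = psl_rep a" and "B = psl_rep b"
  have det: "det A = 1" "det B = 1" "det (adjugate2 A ** B) = 1" "det (mat 1 :: complex^2^2) = 1"
    by (simp_all add: A_def B_def det_mul det_adjugate2)
  have "psl_inv a * b = psl_inv (psl_proj A) * psl_proj B"
    by (simp add: A_def B_def)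
  also have "\<dots> = psl_proj (adjugate2 A ** B)"
    using det by (simp add: psl_inv_proj psl_proj_mult det_adjugate2)
  finally have "psl_inv a * b = 1 \<longleftrightarrow> adjugate2 A ** B = mat 1 \<or> adjugate2 A ** B = - mat 1"
    using psl_proj_eq_iff[OF det(4,3)] by (simp add: one_psl2_eq eq_commute)
  also have "\<dots> \<longleftrightarrow> B = A \<or> B = - A"
    using matrix_mult_adjugate2[OF det(1)]
    by (metis matrix_mul_assoc matrix_mul_lid matrix_mul_rid matrix_mul_uminus_right)
  also have "\<dots> \<longleftrightarrow> a = b"
    using psl_proj_eq_iff[OF det(1,2)] by (simp add: A_def B_def)
  finally show ?thesis .
qed

definition proj_dist :: "'a::real_normed_vector^'n^'m \<Rightarrow> 'a^'n^'m \<Rightarrow> real" where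
  "proj_dist A B = min (entry_norm (A - B)) (entry_norm (A + B))"

lemma proj_dist_uminus_left [simp]: "proj_dist (- A) B = proj_dist A B"
proof -
  have "- A - B = - (A + B)" "- A + B = - (A - B)" by simp_all
  then show ?thesis unfolding proj_dist_def by (simp only: entry_norm_uminus min.commute)
qed

lemma proj_dist_commute: "proj_dist A B = proj_dist B A"
  unfolding proj_dist_def by (simp only: entry_norm_minus_commute[of A] add.commute[of A])

lemma proj_dist_uminus_right [simp]: "proj_dist A (- B) = proj_dist A B"
  by (metis proj_dist_commute proj_dist_uminus_left)

lemma proj_dist_le: "proj_dist A B \<le> entry_norm (A - B)"
  by (simp add: proj_dist_def)

lemma proj_dist_triangle: "proj_dist A C \<le> proj_dist A B + proj_dist B C"
proof -
  have "A - C = (A - B) + (B - C)" "A + C = (A - B) + (B + C)"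
       "A - C = (A + B) + - (B + C)" "A + C = (A + B) + - (B - C)"
    by (simp_all add: algebra_simps)
  note eqs = this
  have "entry_norm (A - C) \<le> entry_norm (A - B) + entry_norm (B - C)"
    "entry_norm (A + C) \<le> entry_norm (A - B) + entry_norm (B + C)"
    "entry_norm (A - C) \<le> entry_norm (A + B) + entry_norm (B + C)"
    "entry_norm (A + C) \<le> entry_norm (A + B) + entry_norm (B - C)"
    using entry_norm_triangle[of "A - B" "B - C"] entry_norm_triangle[of "A - B" "B + C"]
      entry_norm_triangle[of "A + B" "- (B + C)"] entry_norm_triangle[of "A + B" "- (B - C)"]
    unfolding eqs[symmetric] entry_norm_uminus by simp_all
  then show ?thesis unfolding proj_dist_def by linarith
qed

lemma proj_dist_eq_0_iff: "proj_dist A B = 0 \<longleftrightarrow> B = A \<or> B = - A"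
proof -
  have "proj_dist A B = 0 \<longleftrightarrow> entry_norm (A - B) = 0 \<or> entry_norm (A + B) = 0"
    unfolding proj_dist_def by (smt (verit) entry_norm_nonneg)
  then show ?thesis by (auto simp: entry_norm_eq_0_iff add_eq_0_iff2)
qed

lemma proj_dist_psl_rep_proj:
  assumes "det A = 1" "det B = 1"
  shows "proj_dist (psl_rep (psl_proj A)) (psl_rep (psl_proj B)) = proj_dist A B"
  using psl_rep_proj[OF assms(1)] psl_rep_proj[OF assms(2)] by auto

lemma psl_lift_proj_dist:
  obtains A where "det A = 1" "psl_proj A = g" "entry_norm (A - B) = proj_dist (psl_rep g) B"
proof -
  have "proj_dist (psl_rep g) B = entry_norm (psl_rep g - B) \<or>
        proj_dist (psl_rep g) B = entry_norm (- psl_rep g - B)"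
    unfolding proj_dist_def using entry_norm_uminus[of "psl_rep g + B"] by (simp add: min_def)
  then show ?thesis
    using that[of "psl_rep g"] that[of "- psl_rep g"] by auto
qed

lemma proj_dist_psl_rep_proj_le_norm:
  assumes "det A = 1" "det B = 1"
  shows "proj_dist (psl_rep (psl_proj A)) (psl_rep (psl_proj B)) \<le> 4 * norm (A - B)"
  using proj_dist_le[of A B] entry_norm_le_norm[of "A - B"] by (simp add: proj_dist_psl_rep_proj assms)

lemma open_psl2_proj_dist:
  "open U \<longleftrightarrow> (\<forall>g\<in>U. \<exists>e>0. \<forall>h. proj_dist (psl_rep h) (psl_rep g) < e \<longrightarrow> h \<in> U)"
proof
  assume "open U"
  then have U: "openin (top_of_set SL2) {A \<in> SL2. psl_proj A \<in> U}"
    unfolding open_psl2_def .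
  show "\<forall>g\<in>U. \<exists>e>0. \<forall>h. proj_dist (psl_rep h) (psl_rep g) < e \<longrightarrow> h \<in> U"
  proof (intro ballI)
    fix g assume "g \<in> U"
    then have "psl_rep g \<in> {A \<in> SL2. psl_proj A \<in> U}"
      by (simp add: SL2_def)
    then obtain e where "e > 0"
      and e: "\<forall>A\<in>SL2. dist A (psl_rep g) < e \<longrightarrow> A \<in> {A \<in> SL2. psl_proj A \<in> U}"
      using U unfolding openin_euclidean_subtopology_iff by blast
    have "h \<in> U" if "proj_dist (psl_rep h) (psl_rep g) < e" for h
    proof -
      obtain A where A: "det A = 1" "psl_proj A = h"
        "entry_norm (A - psl_rep g) = proj_dist (psl_rep h) (psl_rep g)"
        by (rule psl_lift_proj_dist)
      with e that norm_le_entry_norm[of "A - psl_rep g"] show ?thesis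
        by (auto simp: SL2_def dist_norm)
    qed
    with \<open>e > 0\<close> show "\<exists>e>0. \<forall>h. proj_dist (psl_rep h) (psl_rep g) < e \<longrightarrow> h \<in> U" by blast
  qed
next
  assume U: "\<forall>g\<in>U. \<exists>e>0. \<forall>h. proj_dist (psl_rep h) (psl_rep g) < e \<longrightarrow> h \<in> U"
  show "open U"
    unfolding open_psl2_def openin_euclidean_subtopology_iff
  proof (intro conjI ballI)
    fix A assume A: "A \<in> {A \<in> SL2. psl_proj A \<in> U}"
    then obtain e where "e > 0"
      and e: "\<And>h. proj_dist (psl_rep h) (psl_rep (psl_proj A)) < e \<Longrightarrow> h \<in> U"
      using U by blast
    have "B \<in> {A \<in> SL2. psl_proj A \<in> U}" if "B \<in> SL2" "dist B A < e / 4" for B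
      using proj_dist_psl_rep_proj_le_norm[of B A] e[of "psl_proj B"] A that
      by (simp add: SL2_def dist_norm)
    with \<open>e > 0\<close> show "\<exists>e>0. \<forall>B\<in>SL2. dist B A < e \<longrightarrow> B \<in> {A \<in> SL2. psl_proj A \<in> U}"
      by (intro exI[of _ "e / 4"]) auto
  qed auto
qed

text \<open>The quotient topology of \<open>psl2\<close> is induced by \<open>proj_dist\<close> on representatives
  (\<open>open_psl2_proj_dist\<close>), so the metric structure below does not change the topology.\<close>

instantiation psl2 :: metric_space
begin

definition dist_psl2 :: "psl2 \<Rightarrow> psl2 \<Rightarrow> real" where
  "dist_psl2 g h = proj_dist (psl_rep g) (psl_rep h)"

definition uniformity_psl2 :: "(psl2 \<times> psl2) filter" where
  "uniformity_psl2 = (INF e\<in>{0<..}. principal {(g, h). dist g h < e})"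

lemma eventually_uniformity_psl2:
  "eventually P (uniformity :: (psl2 \<times> psl2) filter) \<longleftrightarrow> (\<exists>e>0. \<forall>g h. dist g h < e \<longrightarrow> P (g, h))"
  unfolding uniformity_psl2_def
  by (subst eventually_INF_base) (auto simp: eventually_principal subset_eq intro: bexI[of _ "min _ _"])

instance
proof (standard, goal_cases)
  case 1
  show ?case by (rule uniformity_psl2_def)
next
  case (2 U)
  have "(\<forall>g h. dist g h < e \<longrightarrow> (case (g, h) of (g', h') \<Rightarrow> g' = g0 \<longrightarrow> h' \<in> U)) \<longleftrightarrow>
        (\<forall>h. proj_dist (psl_rep h) (psl_rep g0) < e \<longrightarrow> h \<in> U)" for g0 e
    unfolding dist_psl2_def by (auto simp: proj_dist_commute[of "psl_rep g0"])
  then show ?case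
    unfolding open_psl2_proj_dist eventually_uniformity_psl2 by simp
next
  case (3 g h)
  show ?case
    using psl_proj_eq_iff[OF det_psl_rep det_psl_rep, of g h]
    unfolding dist_psl2_def proj_dist_eq_0_iff by simp
next
  case (4 g h k)
  show ?case
    using proj_dist_triangle[of "psl_rep g" "psl_rep h" "psl_rep k"]
      proj_dist_commute[of "psl_rep h" "psl_rep k"]
    unfolding dist_psl2_def by simp
qed

end

lemma dist_psl_proj: "det A = 1 \<Longrightarrow> det B = 1 \<Longrightarrow> dist (psl_proj A) (psl_proj B) = proj_dist A B"
  by (simp add: dist_psl2_def proj_dist_psl_rep_proj)

lemma dist_psl_proj_le: "det A = 1 \<Longrightarrow> det B = 1 \<Longrightarrow> dist (psl_proj A) (psl_proj B) \<le> entry_norm (A - B)"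
  using dist_psl_proj proj_dist_le by metis

lemma psl_lift_dist:
  assumes "det B = 1"
  obtains A where "det A = 1" "psl_proj A = g" "entry_norm (A - B) = dist g (psl_proj B)"
proof -
  have "proj_dist (psl_rep g) B = dist g (psl_proj B)"
    using dist_psl_proj[OF det_psl_rep assms, of g] by simp
  with psl_lift_proj_dist[of g B] that show ?thesis by metis
qed

lemma psl_lift_dist_rep:
  obtains A where "det A = 1" "psl_proj A = g" "entry_norm (A - psl_rep h) = dist g h"
proof -
  obtain A where "det A = 1" "psl_proj A = g" "entry_norm (A - psl_rep h) = dist g (psl_proj (psl_rep h))"
    by (rule psl_lift_dist[OF det_psl_rep])
  then show ?thesis using that by simp
qed

lemma psl_lift_dist_one:
  obtains A where "det A = 1" "psl_proj A = g" "entry_norm (A - mat 1) = dist g 1"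
  using psl_lift_dist[OF det_I, of g] by (metis one_psl2_eq)

lemma tendsto_psl_proj:
  assumes "(X \<longlongrightarrow> L) F" "eventually (\<lambda>x. det (X x) = 1) F" "det L = 1"
  shows "((\<lambda>x. psl_proj (X x)) \<longlongrightarrow> psl_proj L) F"
proof (rule metric_tendsto_imp_tendsto)
  show "((\<lambda>x. entry_norm (X x - L)) \<longlongrightarrow> 0) F"
    using tendsto_entry_norm[OF tendsto_diff[OF assms(1) tendsto_const[of L]]] by simp
  show "eventually (\<lambda>x. dist (psl_proj (X x)) (psl_proj L) \<le> dist (entry_norm (X x - L)) 0) F"
    using assms(2) by eventually_elim (simp add: dist_psl_proj_le assms(3) entry_norm_nonneg)
qed

lemma entry_norm_psl_rep_proj: "det A = 1 \<Longrightarrow> entry_norm (psl_rep (psl_proj A)) = entry_norm A"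
  by (metis psl_rep_proj entry_norm_uminus)

lemma entry_norm_psl_rep_le: "entry_norm (psl_rep a) \<le> entry_norm (psl_rep c) + dist a c"
proof -
  obtain A where A: "det A = 1" "psl_proj A = a" "entry_norm (A - psl_rep c) = dist a c"
    by (rule psl_lift_dist_rep)
  have "entry_norm (psl_rep a) = entry_norm A"
    using entry_norm_psl_rep_proj[OF A(1)] A(2) by simp
  also have "\<dots> \<le> entry_norm (psl_rep c) + entry_norm (A - psl_rep c)"
    using entry_norm_triangle[of "psl_rep c" "A - psl_rep c"] by simp
  finally show ?thesis using A(3) by simp
qed

lemma dist_psl_mult_le:
  "dist (a * b) (c * d) \<le> (entry_norm (psl_rep c) + dist a c) * dist b d + dist a c * entry_norm (psl_rep d)"
proof -
  obtain A where A: "det A = 1" "psl_proj A = a" "entry_norm (A - psl_rep c) = dist a c"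
    by (rule psl_lift_dist_rep)
  obtain B where B: "det B = 1" "psl_proj B = b" "entry_norm (B - psl_rep d) = dist b d"
    by (rule psl_lift_dist_rep)
  have "dist (a * b) (c * d) = dist (psl_proj (A ** B)) (psl_proj (psl_rep c ** psl_rep d))"
    using psl_proj_mult[OF A(1) B(1)] psl_proj_mult[OF det_psl_rep det_psl_rep, of c d] A(2) B(2)
    by simp
  also have "\<dots> \<le> entry_norm (A ** B - psl_rep c ** psl_rep d)"
    using A B by (intro dist_psl_proj_le) (simp_all add: det_mul)
  also have "A ** B - psl_rep c ** psl_rep d = A ** (B - psl_rep d) + (A - psl_rep c) ** psl_rep d"
    by (simp add: mat2_eq_iff matrix_mult_2_nth algebra_simps)
  also have "entry_norm \<dots> \<le> entry_norm A * dist b d + dist a c * entry_norm (psl_rep d)"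
    using entry_norm_triangle entry_norm_mult_le A(3) B(3) by (smt (verit))
  also have "entry_norm A \<le> entry_norm (psl_rep c) + dist a c"
    using entry_norm_psl_rep_le[of a c] entry_norm_psl_rep_proj[OF A(1)] A(2) by simp
  then have "entry_norm A * dist b d \<le> (entry_norm (psl_rep c) + dist a c) * dist b d"
    by (simp add: mult_right_mono)
  finally show ?thesis by simp
qed

lemma dist_psl_inv_le: "dist (psl_inv a) (psl_inv c) \<le> dist a c"
proof -
  obtain A where A: "det A = 1" "psl_proj A = a" "entry_norm (A - psl_rep c) = dist a c"
    by (rule psl_lift_dist_rep)
  have "dist (psl_inv a) (psl_inv c) = dist (psl_proj (adjugate2 A)) (psl_proj (adjugate2 (psl_rep c)))"
    using psl_inv_proj[OF A(1)] psl_inv_proj[OF det_psl_rep[of c]] A(2) by simp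
  also have "\<dots> \<le> entry_norm (adjugate2 A - adjugate2 (psl_rep c))"
    using A by (intro dist_psl_proj_le) (simp_all add: det_adjugate2)
  also have "\<dots> = dist a c"
    using A(3) by (simp add: adjugate2_diff[symmetric] entry_norm_adjugate2)
  finally show ?thesis .
qed

lemma tendsto_psl_mult:
  fixes f g :: "'a \<Rightarrow> psl2"
  assumes f: "(f \<longlongrightarrow> a) F" and g: "(g \<longlongrightarrow> b) F"
  shows "((\<lambda>x. f x * g x) \<longlongrightarrow> a * b) F"
proof (rule metric_tendsto_imp_tendsto)
  let ?bound = "\<lambda>x. (entry_norm (psl_rep a) + dist (f x) a) * dist (g x) b + dist (f x) a * entry_norm (psl_rep b)"
  have "((\<lambda>x. dist (f x) a) \<longlongrightarrow> 0) F" "((\<lambda>x. dist (g x) b) \<longlongrightarrow> 0) F"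
    using f g by (simp_all add: tendsto_dist_iff[symmetric])
  then have "(?bound \<longlongrightarrow> (entry_norm (psl_rep a) + 0) * 0 + 0 * entry_norm (psl_rep b)) F"
    by (intro tendsto_add tendsto_mult tendsto_const)
  then show "(?bound \<longlongrightarrow> 0) F"
    by simp
  show "eventually (\<lambda>x. dist (f x * g x) (a * b) \<le> dist (?bound x) 0) F"
    by (intro always_eventually allI order_trans[OF dist_psl_mult_le])
       (simp add: entry_norm_nonneg)
qed

lemma tendsto_psl_inv:
  "(f \<longlongrightarrow> a) F \<Longrightarrow> ((\<lambda>x. psl_inv (f x)) \<longlongrightarrow> psl_inv a) F"
  by (rule metric_tendsto_imp_tendsto) (auto intro: always_eventually dist_psl_inv_le)

lemma continuous_on_psl_mult:
  fixes f g :: "'a::topological_space \<Rightarrow> psl2"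
  shows "continuous_on S f \<Longrightarrow> continuous_on S g \<Longrightarrow> continuous_on S (\<lambda>x. f x * g x)"
  unfolding continuous_on_def by (blast intro: tendsto_psl_mult)

lemma continuous_on_psl_inv: "continuous_on S f \<Longrightarrow> continuous_on S (\<lambda>x. psl_inv (f x))"
  unfolding continuous_on_def by (blast intro: tendsto_psl_inv)

section \<open>No small subgroups\<close>

lemma one_times_one_psl2: "1 * 1 = (1::psl2)"
  by (simp add: one_psl2_eq psl_proj_mult)

lemma entry_norm_psl_rep_one: "entry_norm (psl_rep 1) = 2"
  using entry_norm_psl_rep_proj[OF det_I] by (simp add: one_psl2_eq[symmetric])

lemma dist_psl_square_one_ge:
  fixes a :: psl2
  assumes "dist a 1 \<le> 1/2"
  shows "3/2 * dist a 1 \<le> dist (a * a) 1"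
proof -
  obtain A where A: "det A = 1" "psl_proj A = a" "entry_norm (A - mat 1) = dist a 1"
    by (rule psl_lift_dist_one)
  define X where "X = A - mat 1"
  define d where "d = dist a 1"
  have d: "0 \<le> d" "d * d \<le> d * (1/2)"
    unfolding d_def by (simp, rule mult_left_mono) (use assms in simp_all)
  have X: "entry_norm X = d" "entry_norm (X ** X) \<le> d * d"
    using A(3) entry_norm_mult_le[of X X] by (simp_all add: X_def d_def)
  have dist_eq: "dist (a * a) 1 = proj_dist (A ** A) (mat 1)"
    using dist_psl_proj[of "A ** A" "mat 1"] psl_proj_mult[OF A(1) A(1)] A
    by (simp add: det_mul one_psl2_eq[symmetric])
  have eqs: "A ** A - mat 1 = (X + X) + X ** X"
    "A ** A + mat 1 = (mat 1 + mat 1 + (X + X)) + X ** X"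
    by (simp_all add: X_def mat2_eq_iff matrix_mult_2_nth mat_def algebra_simps)
  have "2 * d - d * d \<le> entry_norm (A ** A - mat 1)"
    using entry_norm_reverse_triangle[of "X + X" "X ** X"] X
    unfolding eqs(1) entry_norm_add_self by linarith
  moreover have "4 - 2 * d - d * d \<le> entry_norm (A ** A + mat 1)"
    using entry_norm_reverse_triangle[of "mat 1 + mat 1 + (X + X)" "X ** X"]
      entry_norm_reverse_triangle[of "mat 1 + mat 1" "X + X"] X
    unfolding eqs(2) entry_norm_add_self entry_norm_mat_1_2 by linarith
  moreover have "d \<le> 1/2"
    using assms by (simp add: d_def)
  ultimately show ?thesis
    using d dist_eq unfolding proj_dist_def d_def[symmetric] by simp
qed

lemma dist_psl_square_one_less:
  fixes x :: psl2
  assumes "0 < r" "r \<le> 1/2" "dist x 1 < r"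
  shows "dist (x * x) 1 < 5 * r"
proof -
  have "dist (x * x) 1 \<le> (2 + dist x 1) * dist x 1 + 2 * dist x 1"
    using dist_psl_mult_le[of x x 1 1] by (simp add: one_times_one_psl2 entry_norm_psl_rep_one)
  also have "\<dots> = 4 * dist x 1 + dist x 1 * dist x 1"
    by (simp add: algebra_simps)
  finally have "dist (x * x) 1 \<le> 4 * dist x 1 + dist x 1 * dist x 1" .
  moreover have "dist x 1 * dist x 1 < r * r"
    using assms by (intro mult_strict_mono) auto
  moreover have "r * r \<le> r * (1/2)"
    using assms by (intro mult_left_mono) auto
  ultimately show ?thesis
    using assms by linarith
qed

lemma psl_discrete_ball_one:
  assumes "psl_discrete G" "1 \<in> G"
  obtains R where "R > 0" "\<forall>g\<in>G. dist g 1 < R \<longrightarrow> g = 1"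
proof -
  obtain U where U: "open U" "U \<inter> G = {1}"
    using assms unfolding psl_discrete_def by blast
  then obtain R where "R > 0" "\<forall>h. dist h 1 < R \<longrightarrow> h \<in> U"
    unfolding open_dist by blast
  with that U(2) show ?thesis by blast
qed

text \<open>Squaring moves an element near \<open>1\<close> away from \<open>1\<close> by a factor \<open>3/2\<close> but at most to distance
  \<open>5 r\<close>, so it cannot jump the empty annulus and the powers \<open>g^(2^k)\<close> stay in the ball.\<close>
lemma psl_subgroup_trivial_near_one:
  assumes G: "psl_subgroup G" and r: "0 < r" "r \<le> 1/2"
    and gap: "\<forall>g\<in>G. \<not> (r \<le> dist g 1 \<and> dist g 1 \<le> 5 * r)"
    and g: "g \<in> G" "dist g 1 < r"
  shows "g = 1"
proof (rule ccontr)
  assume "g \<noteq> 1"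
  define sq where "sq k = ((\<lambda>x. x * x) ^^ k) g" for k
  have sq: "sq k \<in> G \<and> dist (sq k) 1 < r \<and> (3/2)^k * dist g 1 \<le> dist (sq k) 1" for k
  proof (induction k)
    case 0
    show ?case using g by (simp add: sq_def)
  next
    case (Suc k)
    let ?x = "sq k"
    have in_G: "?x * ?x \<in> G"
      using Suc G unfolding psl_subgroup_def by blast
    have "dist (?x * ?x) 1 < 5 * r"
      using Suc r by (intro dist_psl_square_one_less) auto
    then have "dist (?x * ?x) 1 < r"
      using gap in_G by force
    moreover have "(3/2)^Suc k * dist g 1 \<le> dist (?x * ?x) 1"
      using Suc dist_psl_square_one_ge[of ?x] r by auto
    ultimately show ?case
      using in_G by (simp add: sq_def)
  qed
  obtain k where "r / dist g 1 < (3/2)^k"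
    using real_arch_pow[of "3/2" "r / dist g 1"] by auto
  with sq[of k] \<open>g \<noteq> 1\<close> show False
    by (simp add: divide_less_eq)
qed

section \<open>Uniform discreteness along a Chabauty path\<close>

lemma sequentially_meets_imp_eventually_nhds_within:
  fixes a :: "'a::first_countable_topology"
  assumes "\<And>f. \<forall>n. f n \<in> S \<Longrightarrow> f \<longlonglongrightarrow> a \<Longrightarrow> \<exists>n. P (f n)"
  shows "eventually P (inf (nhds a) (principal S))"
proof (rule ccontr)
  obtain A :: "nat \<Rightarrow> 'a set" where A: "\<And>i. open (A i)" "\<And>i. a \<in> A i"
    "\<And>f. \<forall>n. f n \<in> A n \<Longrightarrow> f \<longlonglongrightarrow> a"
    by (rule first_countable_topology_class.countable_basis) blast
  assume "\<not> eventually P (inf (nhds a) (principal S))"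
  with A(1,2) have "\<exists>f. \<forall>n. f n \<in> S \<and> f n \<in> A n \<and> \<not> P (f n)"
    unfolding eventually_inf_principal eventually_nhds by (intro choice) fastforce
  then obtain f where "\<forall>n. f n \<in> S" "\<forall>n. f n \<in> A n" "\<forall>n. \<not> P (f n)"
    by blast
  with A(3) assms show False by blast
qed

lemma psl_bounded_seq_convergent_subseq:
  fixes \<psi> :: "nat \<Rightarrow> psl2"
  assumes "\<And>n. dist (\<psi> n) 1 \<le> B"
  obtains l \<sigma> where "strict_mono \<sigma>" "(\<psi> \<circ> \<sigma>) \<longlonglongrightarrow> l"
proof -
  have "\<forall>n. \<exists>A. det A = 1 \<and> psl_proj A = \<psi> n \<and> entry_norm (A - mat 1) = dist (\<psi> n) 1"
    by (metis psl_lift_dist_one)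
  then obtain A where A: "\<And>n. det (A n) = 1" "\<And>n. psl_proj (A n) = \<psi> n"
    "\<And>n. entry_norm (A n - mat 1) = dist (\<psi> n) 1"
    by metis
  have "\<forall>n. A n \<in> cball 0 (B + 2)"
  proof
    fix n
    have "norm (A n) \<le> entry_norm ((A n - mat 1) + mat 1)"
      using norm_le_entry_norm[of "A n"] by simp
    also have "\<dots> \<le> B + 2"
      using entry_norm_triangle[of "A n - mat 1" "mat 1"] A(3)[of n] assms[of n] by simp
    finally show "A n \<in> cball 0 (B + 2)" by simp
  qed
  then obtain L \<sigma> where \<sigma>: "strict_mono \<sigma>" and lim: "(A \<circ> \<sigma>) \<longlonglongrightarrow> L"
    by (blast elim: seq_compactE[OF compact_imp_seq_compact[OF compact_cball]])
  have "(\<lambda>n. (A \<circ> \<sigma>) n $ i $ j) \<longlonglongrightarrow> L $ i $ j" for i j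
    by (intro tendsto_vec_nth lim)
  then have "(\<lambda>n. det ((A \<circ> \<sigma>) n)) \<longlonglongrightarrow> det L"
    unfolding det_2 by (intro tendsto_diff tendsto_mult)
  then have "det L = 1"
    using A(1) LIMSEQ_unique[OF _ tendsto_const] by (simp add: comp_def)
  then have "(\<lambda>n. psl_proj ((A \<circ> \<sigma>) n)) \<longlonglongrightarrow> psl_proj L"
    using A(1) by (intro tendsto_psl_proj lim) auto
  then show ?thesis
    using that[OF \<sigma>] A(2) by (simp add: comp_def)
qed

lemma chabauty_path_subgroup: "chabauty_path \<Gamma> \<Longrightarrow> t \<in> {0..1} \<Longrightarrow> psl_subgroup (\<Gamma> t)"
  unfolding chabauty_path_def Dspace_def by blast

lemma chabauty_path_eventually_near:
  assumes \<Gamma>: "chabauty_path \<Gamma>" and t0: "t0 \<in> {0..1}" and g: "g \<in> \<Gamma> t0" and "e > 0"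
  shows "eventually (\<lambda>t. \<exists>h\<in>\<Gamma> t. dist h g < e) (inf (nhds t0) (principal {0..1}))"
proof (rule sequentially_meets_imp_eventually_nhds_within)
  fix \<tau> assume "\<forall>n. \<tau> n \<in> {0..1}" "\<tau> \<longlonglongrightarrow> t0"
  then have "chabauty_conv (\<lambda>n. \<Gamma> (\<tau> n)) (\<Gamma> t0)"
    using \<Gamma> t0 unfolding chabauty_path_def by blast
  then obtain \<psi> where \<psi>: "\<forall>n. \<psi> n \<in> \<Gamma> (\<tau> n)" "\<psi> \<longlonglongrightarrow> g"
    using g unfolding chabauty_conv_def by blast
  then obtain n where "dist (\<psi> n) g < e"
    using \<open>e > 0\<close> unfolding lim_sequentially by blast
  with \<psi>(1) show "\<exists>n. \<exists>h\<in>\<Gamma> (\<tau> n). dist h g < e" by blast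
qed

text \<open>A Chabauty limit of elements in the annulus would be an element of \<open>\<Gamma> t0\<close> in it.\<close>
lemma chabauty_path_eventually_gap:
  assumes \<Gamma>: "chabauty_path \<Gamma>" and t0: "t0 \<in> {0..1}" and "r > 0"
    and disc: "\<forall>g\<in>\<Gamma> t0. dist g 1 \<le> 5 * r \<longrightarrow> g = 1"
  shows "eventually (\<lambda>t. \<forall>g\<in>\<Gamma> t. \<not> (r \<le> dist g 1 \<and> dist g 1 \<le> 5 * r))
           (inf (nhds t0) (principal {0..1}))"
proof (rule sequentially_meets_imp_eventually_nhds_within)
  fix \<tau> assume \<tau>: "\<forall>n. \<tau> n \<in> {0..1}" "\<tau> \<longlonglongrightarrow> t0"
  show "\<exists>n. \<forall>g\<in>\<Gamma> (\<tau> n). \<not> (r \<le> dist g 1 \<and> dist g 1 \<le> 5 * r)"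
  proof (rule ccontr)
    assume "\<not> ?thesis"
    then have "\<forall>n. \<exists>g. g \<in> \<Gamma> (\<tau> n) \<and> r \<le> dist g 1 \<and> dist g 1 \<le> 5 * r"
      by blast
    then have "\<exists>\<psi>. \<forall>n. \<psi> n \<in> \<Gamma> (\<tau> n) \<and> r \<le> dist (\<psi> n) 1 \<and> dist (\<psi> n) 1 \<le> 5 * r"
      by (rule choice)
    then obtain \<psi> where "\<forall>n. \<psi> n \<in> \<Gamma> (\<tau> n) \<and> r \<le> dist (\<psi> n) 1 \<and> dist (\<psi> n) 1 \<le> 5 * r"
      by blast
    then have \<psi>: "\<psi> n \<in> \<Gamma> (\<tau> n)" "r \<le> dist (\<psi> n) 1" "dist (\<psi> n) 1 \<le> 5 * r" for n
      by auto
    obtain l \<sigma> where \<sigma>: "strict_mono \<sigma>" and lim: "(\<psi> \<circ> \<sigma>) \<longlonglongrightarrow> l"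
      using psl_bounded_seq_convergent_subseq[of \<psi> "5 * r", OF \<psi>(3)] by blast
    have "chabauty_conv (\<lambda>n. \<Gamma> (\<tau> n)) (\<Gamma> t0)"
      using \<Gamma> t0 \<tau> unfolding chabauty_path_def by blast
    then have "l \<in> \<Gamma> t0"
      using \<psi>(1) \<sigma> lim unfolding chabauty_conv_def by blast
    have "(\<lambda>n. dist ((\<psi> \<circ> \<sigma>) n) 1) \<longlonglongrightarrow> dist l 1"
      by (intro tendsto_dist lim tendsto_const)
    then have "r \<le> dist l 1" "dist l 1 \<le> 5 * r"
      using \<psi>(2,3) by (auto intro: LIMSEQ_le_const LIMSEQ_le_const2)
    with disc \<open>l \<in> \<Gamma> t0\<close> \<open>r > 0\<close> show False by auto
  qed
qed

lemma chabauty_path_uniformly_discrete: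
  assumes \<Gamma>: "chabauty_path \<Gamma>" and t0: "t0 \<in> {0..1}"
  obtains r where "r > 0" "eventually (\<lambda>t. \<forall>g\<in>\<Gamma> t. dist g 1 < r \<longrightarrow> g = 1) (inf (nhds t0) (principal {0..1}))"
proof -
  have "psl_discrete (\<Gamma> t0)"
    using \<Gamma> t0 unfolding chabauty_path_def Dspace_def by blast
  then obtain R where "R > 0" and R: "\<forall>g\<in>\<Gamma> t0. dist g 1 < R \<longrightarrow> g = 1"
    using psl_discrete_ball_one chabauty_path_subgroup[OF \<Gamma> t0] unfolding psl_subgroup_def by blast
  define r where "r = min (1/2) (R/6)"
  have r: "0 < r" "r \<le> 1/2" "5 * r < R"
    using \<open>R > 0\<close> by (auto simp: r_def)
  have "eventually (\<lambda>t. \<forall>g\<in>\<Gamma> t. \<not> (r \<le> dist g 1 \<and> dist g 1 \<le> 5 * r)) (inf (nhds t0) (principal {0..1}))"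
    using R r by (intro chabauty_path_eventually_gap[OF \<Gamma> t0]) auto
  moreover have "eventually (\<lambda>t. t \<in> {0..1}) (inf (nhds t0) (principal {0..1}))"
    by (simp add: eventually_inf_principal)
  ultimately have "eventually (\<lambda>t. \<forall>g\<in>\<Gamma> t. dist g 1 < r \<longrightarrow> g = 1) (inf (nhds t0) (principal {0..1}))"
    by eventually_elim (use chabauty_path_subgroup[OF \<Gamma>] r psl_subgroup_trivial_near_one in blast)
  with r(1) that show ?thesis by blast
qed

section \<open>\<open>\<Gamma>\<close>-paths and the maps \<open>J\<^sub>s\<^sub>,\<^sub>t\<close>\<close>

lemma psl_inv_mult_near_one:
  assumes "r > 0"
  obtains \<rho> where "\<rho> > 0" "\<And>a b. dist a g < \<rho> \<Longrightarrow> dist b g < \<rho> \<Longrightarrow> dist (psl_inv a * b) 1 < r"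
proof -
  have "((\<lambda>p. psl_inv (fst p) * snd p) \<longlongrightarrow> psl_inv (fst (g, g)) * snd (g, g)) (nhds (g, g))"
    by (intro tendsto_psl_mult tendsto_psl_inv tendsto_fst tendsto_snd filterlim_ident)
  then have "eventually (\<lambda>p. dist (psl_inv (fst p) * snd p) 1 < r) (nhds (g, g))"
    using assms psl_inv_mult_eq_one_iff[of g g] unfolding tendsto_iff by simp
  then obtain d where "d > 0" and d: "\<And>p. dist p (g, g) < d \<Longrightarrow> dist (psl_inv (fst p) * snd p) 1 < r"
    unfolding eventually_nhds_metric by blast
  show ?thesis
  proof (rule that)
    show "d / 2 > 0" using \<open>d > 0\<close> by simp
    fix a b assume "dist a g < d / 2" "dist b g < d / 2"
    then have "dist (a, b) (g, g) < d"
      by (simp add: dist_Pair_Pair sqrt_sum_squares_half_less)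
    then show "dist (psl_inv a * b) 1 < r" using d by fastforce
  qed
qed

lemma at_within_le_nhds_within: "I \<subseteq> S \<Longrightarrow> at x within I \<le> inf (nhds x) (principal S)"
  unfolding at_within_def by (intro inf_mono order_refl) auto

text \<open>The quotient of two such elements lies in \<open>\<Gamma> t\<close> and is close to \<open>1\<close>.\<close>
lemma chabauty_path_eventually_unique_near:
  assumes \<Gamma>: "chabauty_path \<Gamma>" and t0: "t0 \<in> {0..1}"
  obtains \<rho> where "\<rho> > 0"
    "eventually (\<lambda>t. \<forall>h1\<in>\<Gamma> t. \<forall>h2\<in>\<Gamma> t. dist h1 g < \<rho> \<longrightarrow> dist h2 g < \<rho> \<longrightarrow> h1 = h2)
       (inf (nhds t0) (principal {0..1}))"
proof -
  obtain r where "r > 0" and disc: "eventually (\<lambda>t. \<forall>g\<in>\<Gamma> t. dist g 1 < r \<longrightarrow> g = 1) (inf (nhds t0) (principal {0..1}))"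
    by (rule chabauty_path_uniformly_discrete[OF \<Gamma> t0])
  obtain \<rho> where "\<rho> > 0" and \<rho>: "\<And>a b. dist a g < \<rho> \<Longrightarrow> dist b g < \<rho> \<Longrightarrow> dist (psl_inv a * b) 1 < r"
    using psl_inv_mult_near_one[OF \<open>r > 0\<close>] by blast
  have "eventually (\<lambda>t. t \<in> {0..1}) (inf (nhds t0) (principal {0..1}))"
    by (simp add: eventually_inf_principal)
  with disc have "eventually (\<lambda>t. \<forall>h1\<in>\<Gamma> t. \<forall>h2\<in>\<Gamma> t. dist h1 g < \<rho> \<longrightarrow> dist h2 g < \<rho> \<longrightarrow> h1 = h2)
       (inf (nhds t0) (principal {0..1}))"
  proof eventually_elim
    case (elim t)
    have sub: "psl_subgroup (\<Gamma> t)"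
      using chabauty_path_subgroup[OF \<Gamma> elim(2)] .
    show ?case
    proof (intro ballI impI)
      fix h1 h2 assume h: "h1 \<in> \<Gamma> t" "h2 \<in> \<Gamma> t" "dist h1 g < \<rho>" "dist h2 g < \<rho>"
      then have "psl_inv h1 * h2 \<in> \<Gamma> t"
        using sub unfolding psl_subgroup_def by blast
      with elim(1) \<rho>[OF h(3,4)] have "psl_inv h1 * h2 = 1"
        by blast
      then show "h1 = h2"
        by (simp add: psl_inv_mult_eq_one_iff)
    qed
  qed
  with \<open>\<rho> > 0\<close> that show ?thesis by blast
qed

lemma gpath_eventually_agree:
  assumes \<Gamma>: "chabauty_path \<Gamma>" and I: "I \<subseteq> {0..1}" "x \<in> I"
    and cont: "continuous_on I j1" "continuous_on I j2"
    and mem: "\<forall>t\<in>I. j1 t \<in> \<Gamma> t \<and> j2 t \<in> \<Gamma> t" and eq: "j1 x = j2 x"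
  shows "eventually (\<lambda>t. j1 t = j2 t) (at x within I)"
proof -
  obtain \<rho> where "\<rho> > 0" and uniq:
    "eventually (\<lambda>t. \<forall>h1\<in>\<Gamma> t. \<forall>h2\<in>\<Gamma> t. dist h1 (j1 x) < \<rho> \<longrightarrow> dist h2 (j1 x) < \<rho> \<longrightarrow> h1 = h2)
       (inf (nhds x) (principal {0..1}))"
    using chabauty_path_eventually_unique_near[OF \<Gamma>] I by blast
  have "eventually (\<lambda>t. dist (j1 t) (j1 x) < \<rho>) (at x within I)"
    "eventually (\<lambda>t. dist (j2 t) (j2 x) < \<rho>) (at x within I)"
    using cont I(2) \<open>\<rho> > 0\<close> unfolding continuous_on_def tendsto_iff by blast+
  moreover have "eventually (\<lambda>t. t \<in> I) (at x within I)"
    by (simp add: eventually_at_filter)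
  moreover note filter_leD[OF at_within_le_nhds_within[OF I(1)] uniq]
  ultimately show ?thesis
    by eventually_elim (use mem eq in metis)
qed

lemma gpath_unique:
  assumes \<Gamma>: "chabauty_path \<Gamma>" and j1: "gpath \<Gamma> s \<psi> I1 j1" and j2: "gpath \<Gamma> s \<psi> I2 j2"
    and t: "t \<in> I1 \<inter> I2"
  shows "j1 t = j2 t"
proof -
  define I where "I = I1 \<inter> I2"
  have I: "is_interval I" "I \<subseteq> {0..1}" "s \<in> I"
    using j1 j2 unfolding gpath_def I_def by (auto intro: is_interval_Int)
  have cont: "continuous_on I j1" "continuous_on I j2" and mem: "\<forall>t\<in>I. j1 t \<in> \<Gamma> t \<and> j2 t \<in> \<Gamma> t"
    using j1 j2 unfolding gpath_def I_def by (auto intro: continuous_on_subset)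
  define S where "S = {t \<in> I. j1 t = j2 t}"
  have "openin (top_of_set I) S"
    unfolding openin_euclidean_subtopology_iff
  proof (intro conjI ballI)
    fix x assume "x \<in> S"
    then have "eventually (\<lambda>t. j1 t = j2 t) (at x within I)"
      using gpath_eventually_agree[OF \<Gamma> I(2) _ cont mem] unfolding S_def by blast
    then obtain d where d: "d > 0" "\<forall>t\<in>I. t \<noteq> x \<and> dist t x < d \<longrightarrow> j1 t = j2 t"
      unfolding eventually_at by blast
    have "t \<in> S" if "t \<in> I" "dist t x < d" for t
      using d(2) that \<open>x \<in> S\<close> by (cases "t = x") (auto simp: S_def)
    with d(1) show "\<exists>e>0. \<forall>t\<in>I. dist t x < e \<longrightarrow> t \<in> S"
      by blast
  qed (auto simp: S_def)
  moreover have "closedin (top_of_set I) {t \<in> I. dist (j1 t) (j2 t) = 0}"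
    by (intro continuous_closedin_preimage_constant continuous_on_dist cont)
  then have "closedin (top_of_set I) S"
    by (simp add: S_def)
  moreover have "s \<in> S"
    using j1 j2 I(3) unfolding gpath_def S_def by simp
  ultimately have "S = I"
    using is_interval_connected[OF I(1)] unfolding connected_clopen by blast
  with t show ?thesis
    unfolding S_def I_def by blast
qed

lemma Jmap_eq_Some:
  assumes \<Gamma>: "chabauty_path \<Gamma>" and j: "gpath \<Gamma> s \<psi> I j" and t: "t \<in> I"
  shows "Jmap \<Gamma> s t \<psi> = Some (j t)"
proof -
  have "(THE g. \<exists>I j. gpath \<Gamma> s \<psi> I j \<and> t \<in> I \<and> j t = g) = j t"
    using j t gpath_unique[OF \<Gamma> _ j] by (intro the_equality) blast+
  with j t show ?thesis
    unfolding Jmap_def by auto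
qed

lemma gpath_restrict:
  "gpath \<Gamma> s \<psi> I j \<Longrightarrow> J \<subseteq> I \<Longrightarrow> is_interval J \<Longrightarrow> s \<in> J \<Longrightarrow> gpath \<Gamma> s \<psi> J j"
  unfolding gpath_def by (auto intro: continuous_on_subset)

text \<open>Chabauty approximants of \<open>j x\<close> in \<open>\<Gamma> t\<close> are themselves near \<open>g\<close>, so they are \<open>j t\<close>.\<close>
lemma continuous_on_unique_near_element:
  assumes \<Gamma>: "chabauty_path \<Gamma>" and I: "I \<subseteq> {0..1}"
    and uniq: "\<And>t h1 h2. t \<in> I \<Longrightarrow> h1 \<in> \<Gamma> t \<Longrightarrow> h2 \<in> \<Gamma> t \<Longrightarrow> dist h1 g < \<rho> \<Longrightarrow> dist h2 g < \<rho> \<Longrightarrow> h1 = h2"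
    and near: "\<And>t. t \<in> I \<Longrightarrow> \<exists>h\<in>\<Gamma> t. dist h g < \<rho>"
  defines "j \<equiv> \<lambda>t. SOME h. h \<in> \<Gamma> t \<and> dist h g < \<rho>"
  shows "continuous_on I j"
proof -
  have j: "j t \<in> \<Gamma> t \<and> dist (j t) g < \<rho>" if "t \<in> I" for t
    using near[OF that] unfolding j_def by (metis (mono_tags, lifting) someI_ex)
  show ?thesis
    unfolding continuous_on_def tendsto_iff
  proof (intro ballI allI impI)
    fix x and e :: real assume x: "x \<in> I" and "e > 0"
    define c where "c = \<rho> - dist (j x) g"
    have "c > 0" using j[OF x] by (simp add: c_def)
    have "x \<in> {0..1}" "min e c > 0"
      using x I \<open>e > 0\<close> \<open>c > 0\<close> by auto
    from chabauty_path_eventually_near[OF \<Gamma> this(1) conjunct1[OF j[OF x]] this(2)]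
    have "eventually (\<lambda>t. \<exists>h\<in>\<Gamma> t. dist h (j x) < min e c) (at x within I)"
      by (rule filter_leD[OF at_within_le_nhds_within[OF I]])
    moreover have "eventually (\<lambda>t. t \<in> I) (at x within I)"
      by (simp add: eventually_at_filter)
    ultimately show "eventually (\<lambda>t. dist (j t) (j x) < e) (at x within I)"
    proof eventually_elim
      case (elim t)
      then obtain h where h: "h \<in> \<Gamma> t" "dist h (j x) < min e c"
        by blast
      have "dist h g < \<rho>"
        using dist_triangle[of h g "j x"] h(2) unfolding c_def by simp
      then have "h = j t"
        using uniq[OF elim(2) h(1)] j[OF elim(2)] by blast
      with h(2) show ?case by simp
    qed
  qed
qed

lemma gpath_exists:
  assumes \<Gamma>: "chabauty_path \<Gamma>" and s: "s \<in> {0..1}" and \<psi>: "\<psi> \<in> \<Gamma> s"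
  shows "eventually (\<lambda>d. \<exists>j. gpath \<Gamma> s \<psi> ({0..1} \<inter> ball s d) j) (at_right 0)"
proof -
  obtain \<rho> where "\<rho> > 0" and uniq:
    "eventually (\<lambda>t. \<forall>h1\<in>\<Gamma> t. \<forall>h2\<in>\<Gamma> t. dist h1 \<psi> < \<rho> \<longrightarrow> dist h2 \<psi> < \<rho> \<longrightarrow> h1 = h2)
       (inf (nhds s) (principal {0..1}))"
    by (rule chabauty_path_eventually_unique_near[OF \<Gamma> s])
  have "eventually (\<lambda>t. (\<forall>h1\<in>\<Gamma> t. \<forall>h2\<in>\<Gamma> t. dist h1 \<psi> < \<rho> \<longrightarrow> dist h2 \<psi> < \<rho> \<longrightarrow> h1 = h2)
      \<and> (\<exists>h\<in>\<Gamma> t. dist h \<psi> < \<rho>)) (inf (nhds s) (principal {0..1}))"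
    using eventually_conj[OF uniq chabauty_path_eventually_near[OF \<Gamma> s \<psi> \<open>\<rho> > 0\<close>]] .
  then obtain d0 where "d0 > 0" and d0: "\<And>t. t \<in> {0..1} \<inter> ball s d0 \<Longrightarrow>
      (\<forall>h1\<in>\<Gamma> t. \<forall>h2\<in>\<Gamma> t. dist h1 \<psi> < \<rho> \<longrightarrow> dist h2 \<psi> < \<rho> \<longrightarrow> h1 = h2) \<and> (\<exists>h\<in>\<Gamma> t. dist h \<psi> < \<rho>)"
    unfolding eventually_inf_principal eventually_nhds_metric by (auto simp: dist_commute)
  define I0 where "I0 = {0..1} \<inter> ball s d0"
  define j where "j = (\<lambda>t. SOME h. h \<in> \<Gamma> t \<and> dist h \<psi> < \<rho>)"
  have I0: "I0 \<subseteq> {0..1}" "is_interval I0" "s \<in> I0"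
    using s \<open>d0 > 0\<close> unfolding I0_def by (auto intro: is_interval_Int is_interval_cc is_interval_ball_real)
  have j: "j t \<in> \<Gamma> t \<and> dist (j t) \<psi> < \<rho>" if "t \<in> I0" for t
    using d0[of t] that unfolding j_def I0_def by (metis (mono_tags, lifting) someI_ex)
  have "j s = \<psi>"
    using d0[of s] j[OF I0(3)] \<psi> \<open>\<rho> > 0\<close> I0(3) unfolding I0_def by auto
  moreover have "continuous_on I0 j"
    unfolding j_def using d0 I0(1) by (intro continuous_on_unique_near_element[OF \<Gamma>]) (auto simp: I0_def)
  ultimately have path: "gpath \<Gamma> s \<psi> I0 j"
    using I0 j unfolding gpath_def by blast
  have "\<exists>j. gpath \<Gamma> s \<psi> ({0..1} \<inter> ball s d) j" if "0 < d" "d < d0" for d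
    using that s by (intro exI[of _ j] gpath_restrict[OF path])
      (auto simp: I0_def intro: is_interval_Int is_interval_cc is_interval_ball_real)
  with \<open>d0 > 0\<close> show ?thesis
    unfolding eventually_at_right_field by blast
qed

lemma gpath_one:
  assumes "chabauty_path \<Gamma>" "I \<subseteq> {0..1}" "is_interval I" "s \<in> I"
  shows "gpath \<Gamma> s 1 I (\<lambda>t. 1)"
  using assms chabauty_path_subgroup[OF assms(1)] unfolding gpath_def psl_subgroup_def by auto

lemma gpath_mult:
  assumes \<Gamma>: "chabauty_path \<Gamma>" and ja: "gpath \<Gamma> s a I ja" and jb: "gpath \<Gamma> s b I jb"
  shows "gpath \<Gamma> s (a * b) I (\<lambda>t. ja t * jb t)"
proof -
  have "ja t * jb t \<in> \<Gamma> t" if "t \<in> I" for t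
    using ja jb that chabauty_path_subgroup[OF \<Gamma>, of t] unfolding gpath_def psl_subgroup_def by blast
  with ja jb show ?thesis
    unfolding gpath_def by (auto intro: continuous_on_psl_mult)
qed

lemma gpath_inv:
  assumes \<Gamma>: "chabauty_path \<Gamma>" and ja: "gpath \<Gamma> s a I ja"
  shows "gpath \<Gamma> s (psl_inv a) I (\<lambda>t. psl_inv (ja t))"
proof -
  have "psl_inv (ja t) \<in> \<Gamma> t" if "t \<in> I" for t
    using ja that chabauty_path_subgroup[OF \<Gamma>, of t] unfolding gpath_def psl_subgroup_def by blast
  with ja show ?thesis
    unfolding gpath_def by (auto intro: continuous_on_psl_inv)
qed

lemma gpath_subgroup:
  assumes "chabauty_path \<Gamma>" "I \<subseteq> {0..1}" "is_interval I" "s \<in> I"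
  shows "psl_subgroup {\<psi>. \<exists>j. gpath \<Gamma> s \<psi> I j}"
  unfolding psl_subgroup_def mem_Collect_eq
  using gpath_one[OF assms] gpath_mult[OF assms(1)] gpath_inv[OF assms(1)] by blast

lemma Jmap_inj:
  assumes \<Gamma>: "chabauty_path \<Gamma>" and ja: "gpath \<Gamma> s a I ja" and jb: "gpath \<Gamma> s b I jb"
    and t: "t \<in> I" and eq: "Jmap \<Gamma> s t a = Jmap \<Gamma> s t b"
  shows "a = b"
proof -
  have "ja t = jb t"
    using eq Jmap_eq_Some[OF \<Gamma> ja t] Jmap_eq_Some[OF \<Gamma> jb t] by simp
  then have "gpath \<Gamma> t (ja t) I ja" "gpath \<Gamma> t (ja t) I jb"
    using ja jb t unfolding gpath_def by auto
  from gpath_unique[OF \<Gamma> this, of s] have "ja s = jb s"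
    using ja unfolding gpath_def by blast
  with ja jb show ?thesis
    unfolding gpath_def by simp
qed

lemma fin_gen_common_gpaths:
  assumes \<Gamma>: "chabauty_path \<Gamma>" and s: "s \<in> {0..1}" and "H \<subseteq> \<Gamma> s" "psl_fin_gen H"
  obtains d where "d > 0" "\<And>h. h \<in> H \<Longrightarrow> \<exists>j. gpath \<Gamma> s h ({0..1} \<inter> ball s d) j"
proof -
  obtain F where F: "finite F" "F \<subseteq> H" "H = psl_generated F"
    using assms(4) unfolding psl_fin_gen_def by blast
  have "eventually (\<lambda>d. \<forall>f\<in>F. \<exists>j. gpath \<Gamma> s f ({0..1} \<inter> ball s d) j) (at_right 0)"
    using F(1,2) assms(3) gpath_exists[OF \<Gamma> s] by (intro eventually_ball_finite) auto
  then obtain d where "d > 0" and paths: "\<forall>f\<in>F. \<exists>j. gpath \<Gamma> s f ({0..1} \<inter> ball s d) j"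
    unfolding eventually_at_right_field by (meson field_lbound_gt_zero)
  define I where "I = {0..1} \<inter> ball s d"
  have I: "I \<subseteq> {0..1}" "is_interval I" "s \<in> I"
    using s \<open>d > 0\<close> unfolding I_def by (auto intro: is_interval_Int is_interval_cc is_interval_ball_real)
  have "F \<subseteq> {\<psi>. \<exists>j. gpath \<Gamma> s \<psi> I j}"
    using paths unfolding I_def by blast
  then have "H \<subseteq> {\<psi>. \<exists>j. gpath \<Gamma> s \<psi> I j}"
    unfolding F(3) psl_generated_def using gpath_subgroup[OF \<Gamma> I] by (simp add: Inter_lower)
  with \<open>d > 0\<close> that show ?thesis
    unfolding I_def by blast
qed

lemma Jmap_inj_hom:
  assumes \<Gamma>: "chabauty_path \<Gamma>" and paths: "\<And>h. h \<in> H \<Longrightarrow> \<exists>j. gpath \<Gamma> s h I j" and t: "t \<in> I"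
  shows "(\<forall>h\<in>H. Jmap \<Gamma> s t h \<noteq> None) \<and> inj_on (Jmap \<Gamma> s t) H \<and>
    (\<forall>a\<in>H. \<forall>b\<in>H. Jmap \<Gamma> s t (a * b) = Some (the (Jmap \<Gamma> s t a) * the (Jmap \<Gamma> s t b)))"
proof (intro conjI ballI inj_onI)
  fix h assume "h \<in> H"
  then obtain j where "gpath \<Gamma> s h I j"
    using paths by blast
  then show "Jmap \<Gamma> s t h \<noteq> None"
    using Jmap_eq_Some[OF \<Gamma> _ t] by simp
next
  fix a b assume "a \<in> H" "b \<in> H"
  then obtain ja jb where ja: "gpath \<Gamma> s a I ja" and jb: "gpath \<Gamma> s b I jb"
    using paths by blast
  show "Jmap \<Gamma> s t a = Jmap \<Gamma> s t b \<Longrightarrow> a = b"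
    by (rule Jmap_inj[OF \<Gamma> ja jb t])
  show "Jmap \<Gamma> s t (a * b) = Some (the (Jmap \<Gamma> s t a) * the (Jmap \<Gamma> s t b))"
    using Jmap_eq_Some[OF \<Gamma> gpath_mult[OF \<Gamma> ja jb] t] Jmap_eq_Some[OF \<Gamma> ja t] Jmap_eq_Some[OF \<Gamma> jb t]
    by simp
qed

theorem mainTheorem12:
  fixes \<Gamma> :: "real \<Rightarrow> psl2 set" and s :: real and H :: "psl2 set"
  assumes "chabauty_path \<Gamma>"
    and "s \<in> {0..1}"
    and "H \<subseteq> \<Gamma> s" and "psl_subgroup H" and "psl_fin_gen H"
  shows "\<exists>\<epsilon>>0. \<forall>t\<in>{0..1}. \<bar>t - s\<bar> < \<epsilon> \<longrightarrow>
           (\<forall>h\<in>H. Jmap \<Gamma> s t h \<noteq> None) \<and>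
           inj_on (Jmap \<Gamma> s t) H \<and>
           (\<forall>a\<in>H. \<forall>b\<in>H. Jmap \<Gamma> s t (a * b) = Some (the (Jmap \<Gamma> s t a) * the (Jmap \<Gamma> s t b)))"
proof -
  obtain d where "d > 0" and paths: "\<And>h. h \<in> H \<Longrightarrow> \<exists>j. gpath \<Gamma> s h ({0..1} \<inter> ball s d) j"
    using fin_gen_common_gpaths[OF assms(1-3,5)] by blast
  have "t \<in> {0..1} \<inter> ball s d" if "t \<in> {0..1}" "\<bar>t - s\<bar> < d" for t
    using that by (simp add: dist_real_def abs_minus_commute)
  with \<open>d > 0\<close> show ?thesis
    using Jmap_inj_hom[OF assms(1) paths] by blast
qed

end
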